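(* Let $k\ge1$ and $n\ge1$. Let $I_1,I'_1,\dots,I_k,I'_k$ be sets of consecutive integers in $\{1,\dots,n\}$ such that for each $i$, $I_i,I'_i$ is a 1-shift pair, and for each $i=2,\dots,k$, $I_i\cap I'_i\supseteq I_{i-1}\cup I'_{i-1}$. Let $A$ be the $2k\times n$ $(0,1)$-matrix whose row $i$ has its 1's exactly in the columns of $I_i$ and whose row $2k+1-i$ has its 1's exactly in the columns of $I'_i$ ($i=1,\dots,k$), and suppose $A$ has no zero column. Let $R$ and $S$ be the row and column sum vectors of $A$. Then $\mathcal{A}(R,S)$ is a convex-class and consists of exactly $2^k$ matrices.
   Context: $\mathcal{A}(R,S)$ is the set of $(0,1)$-matrices with row sum vector $R$ and column sum vector $S$. A $(0,1)$-matrix is convex if in every row and column the 1's occur consecutively; $\mathcal{A}(R,S)$ is a convex-class if every matrix in it is convex. Two intervals $I=\{a,a+1,\dots,b\}$ and $I'=\{a+1,\dots,b+1\}$ with $a<b$ (in either order) form a 1-shift pair. *)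

theory Defs
  imports Main
begin

text \<open>An m x n (0,1)-matrix is represented as a function nat \<Rightarrow> nat \<Rightarrow> nat,
  rows indexed 1..m, columns 1..n, entries in {0,1}, and zero outside this range
  (so that distinct matrices are distinct functions).\<close>

definition zero_one_matrices :: "nat \<Rightarrow> nat \<Rightarrow> (nat \<Rightarrow> nat \<Rightarrow> nat) set" where
  "zero_one_matrices m n =
     {A. (\<forall>i j. A i j \<in> {0, 1}) \<and>
         (\<forall>i j. (i \<notin> {1..m} \<or> j \<notin> {1..n}) \<longrightarrow> A i j = 0)}"

definition row_sum :: "nat \<Rightarrow> (nat \<Rightarrow> nat \<Rightarrow> nat) \<Rightarrow> nat \<Rightarrow> nat" where
  "row_sum n A i = (\<Sum>j = 1..n. A i j)"

definition col_sum :: "nat \<Rightarrow> (nat \<Rightarrow> nat \<Rightarrow> nat) \<Rightarrow> nat \<Rightarrow> nat" where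
  "col_sum m A j = (\<Sum>i = 1..m. A i j)"

definition matrix_class :: "nat \<Rightarrow> nat \<Rightarrow> (nat \<Rightarrow> nat) \<Rightarrow> (nat \<Rightarrow> nat) \<Rightarrow> (nat \<Rightarrow> nat \<Rightarrow> nat) set" where
  "matrix_class m n R S =
     {A \<in> zero_one_matrices m n.
        (\<forall>i \<in> {1..m}. row_sum n A i = R i) \<and> (\<forall>j \<in> {1..n}. col_sum m A j = S j)}"

definition convex_matrix :: "nat \<Rightarrow> nat \<Rightarrow> (nat \<Rightarrow> nat \<Rightarrow> nat) \<Rightarrow> bool" where
  "convex_matrix m n A \<longleftrightarrow>
     (\<forall>i \<in> {1..m}. \<forall>j1 j j2. j1 \<le> j \<and> j \<le> j2 \<and> A i j1 = 1 \<and> A i j2 = 1 \<longrightarrow> A i j = 1) \<and>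
     (\<forall>j \<in> {1..n}. \<forall>i1 i i2. i1 \<le> i \<and> i \<le> i2 \<and> A i1 j = 1 \<and> A i2 j = 1 \<longrightarrow> A i j = 1)"

definition convex_class :: "nat \<Rightarrow> nat \<Rightarrow> (nat \<Rightarrow> nat) \<Rightarrow> (nat \<Rightarrow> nat) \<Rightarrow> bool" where
  "convex_class m n R S \<longleftrightarrow> (\<forall>A \<in> matrix_class m n R S. convex_matrix m n A)"

definition one_shift_pair :: "nat set \<Rightarrow> nat set \<Rightarrow> bool" where
  "one_shift_pair I I' \<longleftrightarrow>
     (\<exists>a b. a < b \<and> ((I = {a..b} \<and> I' = {a+1..b+1}) \<or> (I' = {a..b} \<and> I = {a+1..b+1})))"

definition pair_matrix :: "nat \<Rightarrow> (nat \<Rightarrow> nat set) \<Rightarrow> (nat \<Rightarrow> nat set) \<Rightarrow> nat \<Rightarrow> nat \<Rightarrow> nat" where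
  "pair_matrix k I I' i j =
     (if 1 \<le> i \<and> i \<le> k then (if j \<in> I i then 1 else 0)
      else if k < i \<and> i \<le> 2 * k then (if j \<in> I' (2 * k + 1 - i) then 1 else 0)
      else 0)"

end

(* Write C p = I p \<inter> I' p and U p = I p \<union> I' p. The nesting hypothesis gives U p \<subseteq> C q for
   p < q, so every row of A is comparable with every C p and every U p. Counting the 1's of a
   member of A(R,S) inside the columns of such a set shows that these comparabilities persist
   throughout the class. Hence both rows of pair p lie between C p and U p and, having the right
   size, are I p or I' p; a column of U p - C p, in which all other rows are forced, shows that
   they differ. So A(R,S) consists of the 2^k matrices obtained by swapping the two rows of some
   of the pairs, and each of them is again such a pair matrix, hence convex. *)
theory Submission
  imports Defs
begin

definition row_support :: "nat \<Rightarrow> (nat \<Rightarrow> nat \<Rightarrow> nat) \<Rightarrow> nat \<Rightarrow> nat set" where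
  "row_support n N r = {j \<in> {1..n}. N r j = 1}"

lemma zero_one_entry:
  assumes "N \<in> zero_one_matrices m n" "j \<in> {1..n}"
  shows "N r j = of_bool (j \<in> row_support n N r)"
  using assms unfolding zero_one_matrices_def row_support_def by auto

lemma zero_one_matrices_eqI:
  assumes "M \<in> zero_one_matrices m n" "N \<in> zero_one_matrices m n"
    and "\<And>r. r \<in> {1..m} \<Longrightarrow> row_support n M r = row_support n N r"
  shows "M = N"
proof (intro ext)
  fix r j
  show "M r j = N r j"
  proof (cases "r \<in> {1..m} \<and> j \<in> {1..n}")
    case True
    then show ?thesis using assms zero_one_entry by metis
  next
    case False
    then show ?thesis using assms(1,2) unfolding zero_one_matrices_def by auto
  qed
qed

lemma row_sum_eq_card:
  assumes "N \<in> zero_one_matrices m n"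
  shows "row_sum n N r = card (row_support n N r)"
proof -
  have "row_sum n N r = (\<Sum>j = 1..n. of_bool (j \<in> row_support n N r))"
    unfolding row_sum_def using zero_one_entry[OF assms] by (intro sum.cong) auto
  also have "\<dots> = card (row_support n N r)"
    by (simp add: row_support_def Int_def)
  finally show ?thesis .
qed

lemma sum_col_sum_eq_sum_card:
  assumes "N \<in> zero_one_matrices m n" "T \<subseteq> {1..n}"
  shows "(\<Sum>j\<in>T. col_sum m N j) = (\<Sum>r = 1..m. card (row_support n N r \<inter> T))"
proof -
  have "finite T" using assms(2) finite_subset by blast
  have "(\<Sum>j\<in>T. col_sum m N j) = (\<Sum>r = 1..m. \<Sum>j\<in>T. of_bool (j \<in> row_support n N r))"
    unfolding col_sum_def using zero_one_entry[OF assms(1)] assms(2)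
    by (subst sum.swap) (intro sum.cong; blast)
  also have "\<dots> = (\<Sum>r = 1..m. card (row_support n N r \<inter> T))"
    using \<open>finite T\<close> by (simp add: Int_commute)
  finally show ?thesis .
qed

text \<open>The sum of the column sums over \<open>T\<close> is \<open>\<Sum>\<^sub>r |row\<^sub>r \<inter> T|\<close>. For \<open>N\<close> every
  term is as large as row sums and \<open>|T|\<close> allow, so in \<open>M\<close>, which has the same total,
  every term must be maximal as well.\<close>
lemma matrix_class_comparable_rows:
  assumes M: "M \<in> matrix_class m n R S" and N: "N \<in> matrix_class m n R S"
    and T: "T \<subseteq> {1..n}"
    and comparable: "\<And>q. q \<in> {1..m} \<Longrightarrow> row_support n N q \<subseteq> T \<or> T \<subseteq> row_support n N q"
    and r: "r \<in> {1..m}"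
  shows "T \<subseteq> row_support n N r \<Longrightarrow> T \<subseteq> row_support n M r"
    and "row_support n N r \<subseteq> T \<Longrightarrow> row_support n M r \<subseteq> T"
proof -
  have "finite T" using T finite_subset by blast
  have fin: "finite (row_support n X q)" for X q unfolding row_support_def by auto
  have M01: "M \<in> zero_one_matrices m n" and N01: "N \<in> zero_one_matrices m n"
    using M N unfolding matrix_class_def by auto
  have same_card: "card (row_support n M q) = card (row_support n N q)" if "q \<in> {1..m}" for q
    using M N that row_sum_eq_card[OF M01] row_sum_eq_card[OF N01]
    unfolding matrix_class_def by auto
  have "(\<Sum>j\<in>T. col_sum m M j) = (\<Sum>j\<in>T. col_sum m N j)"
    using M N T unfolding matrix_class_def by (intro sum.cong) auto
  then have total: "(\<Sum>q = 1..m. card (row_support n M q \<inter> T)) =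
      (\<Sum>q = 1..m. card (row_support n N q \<inter> T))"
    using sum_col_sum_eq_sum_card[OF M01 T] sum_col_sum_eq_sum_card[OF N01 T] by simp
  have termwise: "card (row_support n M q \<inter> T) \<le> card (row_support n N q \<inter> T)"
    if q: "q \<in> {1..m}" for q
  proof (cases "T \<subseteq> row_support n N q")
    case True
    then show ?thesis using \<open>finite T\<close> by (simp add: card_mono Int_absorb1)
  next
    case False
    then have "row_support n N q \<inter> T = row_support n N q" using comparable[OF q] by auto
    moreover have "card (row_support n M q \<inter> T) \<le> card (row_support n M q)"
      by (rule card_mono[OF fin]) auto
    ultimately show ?thesis using same_card[OF q] by simp
  qed
  have eq: "card (row_support n M r \<inter> T) = card (row_support n N r \<inter> T)"
    using sum_mono_inv[OF total termwise r] r by auto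
  show "T \<subseteq> row_support n M r" if "T \<subseteq> row_support n N r"
  proof -
    have "card (row_support n M r \<inter> T) = card T" using eq that by (simp add: Int_absorb1)
    then have "row_support n M r \<inter> T = T" using \<open>finite T\<close> by (intro card_subset_eq) auto
    then show ?thesis by auto
  qed
  show "row_support n M r \<subseteq> T" if "row_support n N r \<subseteq> T"
  proof -
    have "card (row_support n M r \<inter> T) = card (row_support n M r)"
      using eq that same_card[OF r] by (simp add: Int_absorb2)
    then have "row_support n M r \<inter> T = row_support n M r" using fin by (intro card_subset_eq) auto
    then show ?thesis by auto
  qed
qed

lemma col_sum_two_rows:
  assumes "col_sum m M j = col_sum m N j" and pq: "p \<in> {1..m}" "q \<in> {1..m}" "p \<noteq> q"
    and "\<And>r. r \<in> {1..m} - {p, q} \<Longrightarrow> M r j = N r j"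
  shows "M p j + M q j = N p j + N q j"
proof -
  have split: "col_sum m X j = (\<Sum>r\<in>{1..m} - {p, q}. X r j) + (X p j + X q j)" for X
    unfolding col_sum_def using pq by (subst sum.subset_diff[of "{p, q}"]) auto
  have "(\<Sum>r\<in>{1..m} - {p, q}. M r j) = (\<Sum>r\<in>{1..m} - {p, q}. N r j)"
    using assms(5) by (rule sum.cong[OF refl])
  then show ?thesis using assms(1) split[of M] split[of N] by simp
qed

lemma one_shift_pair_commute: "one_shift_pair I J \<longleftrightarrow> one_shift_pair J I"
  unfolding one_shift_pair_def by blast

lemma one_shift_pair_neq: "one_shift_pair I J \<Longrightarrow> I \<noteq> J"
  unfolding one_shift_pair_def by auto

lemma one_shift_pair_card_eq: "one_shift_pair I J \<Longrightarrow> card I = card J"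
  unfolding one_shift_pair_def by auto

lemma one_shift_pair_interval: "one_shift_pair I J \<Longrightarrow> \<exists>a b. I = {a..b}"
  unfolding one_shift_pair_def by blast

lemma between_shifted_intervals:
  fixes a b :: nat
  assumes "{a+1..b} \<subseteq> X" "X \<subseteq> {a..b+1}" "card X = b + 1 - a" "a < b"
  shows "X = {a..b} \<or> X = {a+1..b+1}"
proof -
  have X: "X = {a+1..b} \<union> (X \<inter> {a, b+1})" using assms(1,2) by auto
  have "card X = card {a+1..b} + card (X \<inter> {a, b+1})"
    by (subst X, rule card_Un_disjoint) auto
  then have "card (X \<inter> {a, b+1}) = 1" using assms(3,4) by simp
  then obtain c where c: "X \<inter> {a, b+1} = {c}" by (rule card_1_singletonE)
  then have "c = a \<or> c = b + 1" by auto
  then show ?thesis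
  proof
    assume "c = a"
    then have "X = insert a {a+1..b}" using X c by auto
    then show ?thesis using assms(4) by auto
  next
    assume "c = b + 1"
    then have "X = insert (b+1) {a+1..b}" using X c by auto
    then show ?thesis using assms(4) by auto
  qed
qed

lemma one_shift_pair_between:
  assumes "one_shift_pair I J" "I \<inter> J \<subseteq> X" "X \<subseteq> I \<union> J" "card X = card I"
  shows "X = I \<or> X = J"
proof -
  obtain a b where "a < b" and ab: "{I, J} = {{a..b}, {a+1..b+1}}"
    using assms(1) unfolding one_shift_pair_def by auto
  then have "I \<inter> J = {a+1..b}" "I \<union> J = {a..b+1}" "card I = b + 1 - a"
    by (auto simp: doubleton_eq_iff)
  then have "X = {a..b} \<or> X = {a+1..b+1}"
    using assms(2-4) \<open>a < b\<close> by (intro between_shifted_intervals) auto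
  then show ?thesis using ab by (auto simp: doubleton_eq_iff)
qed

definition pair_index :: "nat \<Rightarrow> nat \<Rightarrow> nat" where
  "pair_index k r = (if r \<le> k then r else 2 * k + 1 - r)"

definition pair_row :: "nat \<Rightarrow> (nat \<Rightarrow> nat set) \<Rightarrow> (nat \<Rightarrow> nat set) \<Rightarrow> nat \<Rightarrow> nat set" where
  "pair_row k J J' r = (if r \<le> k then J r else J' (2 * k + 1 - r))"

lemma pair_index_range: "r \<in> {1..2*k} \<Longrightarrow> pair_index k r \<in> {1..k}"
  unfolding pair_index_def by auto

lemma pair_index_eq_iff:
  "r \<in> {1..2*k} \<Longrightarrow> pair_index k r = p \<longleftrightarrow> r = p \<and> p \<le> k \<or> r = 2 * k + 1 - p \<and> r > k"
  unfolding pair_index_def by auto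

lemma pair_row_low: "p \<le> k \<Longrightarrow> pair_row k J J' p = J p"
  unfolding pair_row_def by simp

lemma pair_row_high: "p \<in> {1..k} \<Longrightarrow> pair_row k J J' (2 * k + 1 - p) = J' p"
  unfolding pair_row_def by auto

lemma pair_row_cases: "pair_row k J J' r = J (pair_index k r) \<or> pair_row k J J' r = J' (pair_index k r)"
  unfolding pair_row_def pair_index_def by auto

lemma pair_matrix_eq: "pair_matrix k J J' i j = of_bool (i \<in> {1..2*k} \<and> j \<in> pair_row k J J' i)"
  unfolding pair_matrix_def pair_row_def by auto

lemma col_sum_pair_matrix:
  "col_sum (2*k) (pair_matrix k J J') j = (\<Sum>p = 1..k. of_bool (j \<in> J p) + of_bool (j \<in> J' p))"
proof -
  have "col_sum (2*k) (pair_matrix k J J') j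
      = (\<Sum>i = 1..k. pair_matrix k J J' i j) + (\<Sum>i = k+1..2*k. pair_matrix k J J' i j)"
    unfolding col_sum_def by (subst sum.union_disjoint[symmetric]) (auto intro: sum.cong)
  also have "(\<Sum>i = 1..k. pair_matrix k J J' i j) = (\<Sum>p = 1..k. of_bool (j \<in> J p))"
    by (rule sum.cong) (auto simp: pair_matrix_def)
  also have "(\<Sum>i = k+1..2*k. pair_matrix k J J' i j) = (\<Sum>p = 1..k. of_bool (j \<in> J' p))"
    by (rule sum.reindex_bij_witness[where i="\<lambda>i. 2*k+1-i" and j="\<lambda>i. 2*k+1-i"])
       (auto simp: pair_matrix_def)
  finally show ?thesis by (simp add: sum.distrib)
qed

definition swap_on :: "nat set \<Rightarrow> (nat \<Rightarrow> 'a) \<Rightarrow> (nat \<Rightarrow> 'a) \<Rightarrow> nat \<Rightarrow> 'a" where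
  "swap_on F f g p = (if p \<in> F then g p else f p)"

lemma swap_on_Un: "swap_on F f g p \<union> swap_on F g f p = f p \<union> g p"
  unfolding swap_on_def by auto

lemma swap_on_Int: "swap_on F f g p \<inter> swap_on F g f p = f p \<inter> g p"
  unfolding swap_on_def by auto

locale nested_shift_pairs =
  fixes k n :: nat and I I' :: "nat \<Rightarrow> nat set"
  assumes within: "\<And>p. p \<in> {1..k} \<Longrightarrow> I p \<union> I' p \<subseteq> {1..n}"
    and shift_pair: "\<And>p. p \<in> {1..k} \<Longrightarrow> one_shift_pair (I p) (I' p)"
    and nested: "\<And>p. p \<in> {2..k} \<Longrightarrow> I (p - 1) \<union> I' (p - 1) \<subseteq> I p \<inter> I' p"
begin

abbreviation A :: "nat \<Rightarrow> nat \<Rightarrow> nat" where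
  "A \<equiv> pair_matrix k I I'"

abbreviation \<A> :: "(nat \<Rightarrow> nat \<Rightarrow> nat) set" where
  "\<A> \<equiv> matrix_class (2*k) n (row_sum n A) (col_sum (2*k) A)"

lemma nested_less:
  assumes "p \<in> {1..k}" "q \<le> k" "p < q"
  shows "I p \<union> I' p \<subseteq> I q \<inter> I' q"
  using \<open>p < q\<close> \<open>q \<le> k\<close>
proof (induction q)
  case 0
  then show ?case by simp
next
  case (Suc q)
  have step: "I q \<union> I' q \<subseteq> I (Suc q) \<inter> I' (Suc q)"
    using nested[of "Suc q"] Suc.prems assms(1) by auto
  show ?case
  proof (cases "p = q")
    case True
    then show ?thesis using step by simp
  next
    case False
    then have "I p \<union> I' p \<subseteq> I q \<inter> I' q" using Suc by simp
    then show ?thesis using step by blast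
  qed
qed

lemma pair_row_mono:
  assumes "r \<in> {1..2*k}" "r' \<in> {1..2*k}" "pair_index k r < pair_index k r'"
  shows "pair_row k I I' r \<subseteq> pair_row k I I' r'"
proof -
  let ?p = "pair_index k r" and ?q = "pair_index k r'"
  have "pair_row k I I' r \<subseteq> I ?p \<union> I' ?p" using pair_row_cases by blast
  also have "\<dots> \<subseteq> I ?q \<inter> I' ?q"
    using nested_less pair_index_range assms by (meson atLeastAtMost_iff)
  also have "\<dots> \<subseteq> pair_row k I I' r'" using pair_row_cases by blast
  finally show ?thesis .
qed

lemma pair_row_interval: "r \<in> {1..2*k} \<Longrightarrow> \<exists>a b. pair_row k I I' r = {a..b}"
  using pair_row_cases[of k I I' r] shift_pair[OF pair_index_range]
    one_shift_pair_interval one_shift_pair_commute by metis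

lemma card_pair_row: "r \<in> {1..2*k} \<Longrightarrow> card (pair_row k I I' r) = card (I (pair_index k r))"
  using pair_row_cases[of k I I' r] shift_pair[OF pair_index_range] one_shift_pair_card_eq by metis

lemma pair_row_subset: "r \<in> {1..2*k} \<Longrightarrow> pair_row k I I' r \<subseteq> {1..n}"
  using pair_row_cases[of k I I' r] within[OF pair_index_range] by blast

lemma pair_matrix_zero_one: "A \<in> zero_one_matrices (2*k) n"
  unfolding zero_one_matrices_def pair_matrix_eq using pair_row_subset
  by (auto simp del: atLeastAtMost_iff)

lemma row_support_pair_matrix: "r \<in> {1..2*k} \<Longrightarrow> row_support n A r = pair_row k I I' r"
  using pair_row_subset unfolding row_support_def pair_matrix_eq by (auto simp del: atLeastAtMost_iff)

lemma row_sum_pair_matrix: "r \<in> {1..2*k} \<Longrightarrow> row_sum n A r = card (I (pair_index k r))"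
  using row_sum_eq_card[OF pair_matrix_zero_one] row_support_pair_matrix card_pair_row by simp

lemma pair_matrix_in_class: "A \<in> \<A>"
  unfolding matrix_class_def using pair_matrix_zero_one by simp

lemma pair_matrix_convex: "convex_matrix (2*k) n A"
  unfolding convex_matrix_def pair_matrix_eq
proof (intro conjI ballI allI impI)
  fix i j1 j j2
  assume i: "i \<in> {1..2*k}"
    and h: "j1 \<le> j \<and> j \<le> j2 \<and> of_bool (i \<in> {1..2*k} \<and> j1 \<in> pair_row k I I' i) = 1 \<and>
      of_bool (i \<in> {1..2*k} \<and> j2 \<in> pair_row k I I' i) = 1"
  obtain a b where "pair_row k I I' i = {a..b}" using pair_row_interval[OF i] by blast
  then show "of_bool (i \<in> {1..2*k} \<and> j \<in> pair_row k I I' i) = 1" using i h by auto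
next
  fix j i1 i i2
  assume h: "i1 \<le> i \<and> i \<le> i2 \<and> of_bool (i1 \<in> {1..2*k} \<and> j \<in> pair_row k I I' i1) = 1 \<and>
      of_bool (i2 \<in> {1..2*k} \<and> j \<in> pair_row k I I' i2) = 1"
  then have i1: "i1 \<in> {1..2*k}" "j \<in> pair_row k I I' i1"
    and i2: "i2 \<in> {1..2*k}" "j \<in> pair_row k I I' i2" and i: "i \<in> {1..2*k}"
    by (auto split: if_splits)
  have "j \<in> pair_row k I I' i"
  proof (cases "i = i1 \<or> i = i2")
    case True
    then show ?thesis using i1 i2 by blast
  next
    case False
    then have "pair_index k i1 < pair_index k i \<or> pair_index k i2 < pair_index k i"
      using h i1 i2 unfolding pair_index_def by auto
    then show ?thesis using pair_row_mono[OF i1(1) i] pair_row_mono[OF i2(1) i] i1 i2 by blast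
  qed
  then show "of_bool (i \<in> {1..2*k} \<and> j \<in> pair_row k I I' i) = 1" using i by simp
qed

lemma pair_rows_comparable:
  assumes p: "p \<in> {1..k}" and r: "r \<in> {1..2*k}" and T: "T = I p \<inter> I' p \<or> T = I p \<union> I' p"
  shows "pair_row k I I' r \<subseteq> T \<or> T \<subseteq> pair_row k I I' r"
proof -
  let ?q = "pair_index k r"
  have q: "?q \<in> {1..k}" using pair_index_range[OF r] .
  consider "?q < p" | "?q = p" | "p < ?q" by linarith
  then show ?thesis
  proof cases
    case 1
    then have "I ?q \<union> I' ?q \<subseteq> I p \<inter> I' p" using nested_less q p by simp
    then show ?thesis using pair_row_cases[of k I I' r] T by blast
  next
    case 2
    then show ?thesis using pair_row_cases[of k I I' r] T by blast
  next
    case 3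
    then have "I p \<union> I' p \<subseteq> I ?q \<inter> I' ?q" using nested_less q p by simp
    then show ?thesis using pair_row_cases[of k I I' r] T by blast
  qed
qed

lemma class_row_support_bounds:
  assumes M: "M \<in> \<A>" and r: "r \<in> {1..2*k}"
  defines "q \<equiv> pair_index k r"
  shows "I q \<inter> I' q \<subseteq> row_support n M r" and "row_support n M r \<subseteq> I q \<union> I' q"
proof -
  have q: "q \<in> {1..k}" unfolding q_def using pair_index_range[OF r] .
  have comparable: "row_support n A r' \<subseteq> T \<or> T \<subseteq> row_support n A r'"
    if "T = I q \<inter> I' q \<or> T = I q \<union> I' q" "r' \<in> {1..2*k}" for T r'
    using pair_rows_comparable[OF q that(2,1)] row_support_pair_matrix[OF that(2)] by simp
  have bounds: "I q \<inter> I' q \<subseteq> row_support n A r" "row_support n A r \<subseteq> I q \<union> I' q"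
    using row_support_pair_matrix[OF r] pair_row_cases[of k I I' r] unfolding q_def by auto
  have within': "I q \<inter> I' q \<subseteq> {1..n}" "I q \<union> I' q \<subseteq> {1..n}" using within[OF q] by auto
  show "I q \<inter> I' q \<subseteq> row_support n M r"
    using matrix_class_comparable_rows(1)[OF M pair_matrix_in_class within'(1) _ r] comparable bounds
    by blast
  show "row_support n M r \<subseteq> I q \<union> I' q"
    using matrix_class_comparable_rows(2)[OF M pair_matrix_in_class within'(2) _ r] comparable bounds
    by blast
qed

lemma class_row_support_outside_pair:
  assumes M: "M \<in> \<A>" and r: "r \<in> {1..2*k}" and p: "p \<in> {1..k}" and "pair_index k r \<noteq> p"
    and j: "j \<in> I p \<union> I' p" "j \<notin> I p \<inter> I' p"
  shows "j \<in> row_support n M r \<longleftrightarrow> p < pair_index k r"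
proof -
  let ?q = "pair_index k r"
  have q: "?q \<in> {1..k}" using pair_index_range[OF r] .
  note bounds = class_row_support_bounds[OF M r]
  consider "?q < p" | "p < ?q" using \<open>?q \<noteq> p\<close> by linarith
  then show ?thesis
  proof cases
    case 1
    then show ?thesis using bounds(2) nested_less[OF q] p j by fastforce
  next
    case 2
    then show ?thesis using bounds(1) nested_less[OF p] q j by fastforce
  qed
qed

lemma class_row_support_cases:
  assumes M: "M \<in> \<A>" and r: "r \<in> {1..2*k}"
  defines "q \<equiv> pair_index k r"
  shows "row_support n M r = I q \<or> row_support n M r = I' q"
proof -
  have q: "q \<in> {1..k}" unfolding q_def using pair_index_range[OF r] .
  have M01: "M \<in> zero_one_matrices (2*k) n" using M unfolding matrix_class_def by simp
  have "card (row_support n M r) = row_sum n A r"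
    using row_sum_eq_card[OF M01] M r unfolding matrix_class_def by simp
  also have "\<dots> = card (I q)" using row_sum_pair_matrix[OF r] unfolding q_def .
  finally show ?thesis
    using one_shift_pair_between[OF shift_pair[OF q]] class_row_support_bounds[OF M r]
    unfolding q_def by simp
qed

lemma class_pair_rows:
  assumes M: "M \<in> \<A>" and p: "p \<in> {1..k}"
  shows "row_support n M p = I p \<and> row_support n M (2 * k + 1 - p) = I' p \<or>
    row_support n M p = I' p \<and> row_support n M (2 * k + 1 - p) = I p"
proof -
  define q where "q = 2 * k + 1 - p"
  have rows: "p \<in> {1..2*k}" "q \<in> {1..2*k}" "p \<noteq> q"
    and index: "pair_index k p = p" "pair_index k q = p"
    using p unfolding q_def pair_index_def by auto
  have M01: "M \<in> zero_one_matrices (2*k) n" using M unfolding matrix_class_def by simp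
  have shape: "row_support n M r = I p \<or> row_support n M r = I' p" if "r \<in> {p, q}" for r
  proof -
    have r: "r \<in> {1..2*k}" "pair_index k r = p" using that rows index by auto
    show ?thesis using class_row_support_cases[OF M r(1)] unfolding r(2) .
  qed
  obtain j where j: "j \<in> I p \<union> I' p" "j \<notin> I p \<inter> I' p"
    using one_shift_pair_neq[OF shift_pair[OF p]] by blast
  have j1: "j \<in> {1..n}" using within[OF p] j by blast
  have others: "M r j = A r j" if "r \<in> {1..2*k} - {p, q}" for r
  proof -
    have r: "r \<in> {1..2*k}" "pair_index k r \<noteq> p"
      using that pair_index_eq_iff[of r k p] unfolding q_def by auto
    show ?thesis
      using zero_one_entry[OF M01 j1] zero_one_entry[OF pair_matrix_zero_one j1]
        class_row_support_outside_pair[OF M r(1) p r(2) j]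
        class_row_support_outside_pair[OF pair_matrix_in_class r(1) p r(2) j]
      by simp
  qed
  have "col_sum (2*k) M j = col_sum (2*k) A j" using M j1 unfolding matrix_class_def by simp
  from col_sum_two_rows[OF this rows others] have "M p j + M q j = A p j + A q j" .
  also have "\<dots> = 1"
  proof -
    have "pair_row k I I' p = I p" "pair_row k I I' q = I' p"
      using pair_row_low[of p k] pair_row_high[OF p] p unfolding q_def by auto
    then show ?thesis using j rows unfolding pair_matrix_eq by auto
  qed
  finally have "row_support n M p \<noteq> row_support n M q"
    using zero_one_entry[OF M01 j1] by (auto simp: of_bool_def split: if_splits)
  then show ?thesis using shape[of p] shape[of q] unfolding q_def by auto
qed

lemma swap_on_nested_shift_pairs: "nested_shift_pairs k n (swap_on F I I') (swap_on F I' I)"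
proof
  fix p
  show "p \<in> {1..k} \<Longrightarrow> swap_on F I I' p \<union> swap_on F I' I p \<subseteq> {1..n}"
    using within unfolding swap_on_Un by simp
  show "p \<in> {1..k} \<Longrightarrow> one_shift_pair (swap_on F I I' p) (swap_on F I' I p)"
    using shift_pair one_shift_pair_commute unfolding swap_on_def by simp
  show "p \<in> {2..k} \<Longrightarrow> swap_on F I I' (p - 1) \<union> swap_on F I' I (p - 1) \<subseteq>
      swap_on F I I' p \<inter> swap_on F I' I p"
    using nested unfolding swap_on_Un swap_on_Int by simp
qed

definition swap_matrix :: "nat set \<Rightarrow> nat \<Rightarrow> nat \<Rightarrow> nat" where
  "swap_matrix F = pair_matrix k (swap_on F I I') (swap_on F I' I)"

lemma swap_matrix_in_class: "swap_matrix F \<in> \<A>"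
proof -
  interpret swapped: nested_shift_pairs k n "swap_on F I I'" "swap_on F I' I"
    by (rule swap_on_nested_shift_pairs)
  have rows: "row_sum n (swap_matrix F) r = row_sum n A r" if r: "r \<in> {1..2*k}" for r
    using swapped.row_sum_pair_matrix[OF r] row_sum_pair_matrix[OF r]
      one_shift_pair_card_eq[OF shift_pair[OF pair_index_range[OF r]]]
    unfolding swap_matrix_def swap_on_def by simp
  have cols: "col_sum (2*k) (swap_matrix F) j = col_sum (2*k) A j" for j
    unfolding swap_matrix_def col_sum_pair_matrix swap_on_def by (intro sum.cong) auto
  show ?thesis
    using swapped.pair_matrix_zero_one rows cols unfolding matrix_class_def swap_matrix_def by simp
qed

lemma row_support_swap_matrix:
  assumes p: "p \<in> {1..k}"
  shows "row_support n (swap_matrix F) p = swap_on F I I' p"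
    and "row_support n (swap_matrix F) (2 * k + 1 - p) = swap_on F I' I p"
proof -
  have row_support:
    "row_support n (swap_matrix F) r = pair_row k (swap_on F I I') (swap_on F I' I) r"
    if "r \<in> {1..2*k}" for r
    unfolding swap_matrix_def
    by (rule nested_shift_pairs.row_support_pair_matrix[OF swap_on_nested_shift_pairs that])
  have "p \<in> {1..2*k}" "2 * k + 1 - p \<in> {1..2*k}" using p by auto
  then show "row_support n (swap_matrix F) p = swap_on F I I' p"
    and "row_support n (swap_matrix F) (2 * k + 1 - p) = swap_on F I' I p"
    using row_support pair_row_low[of p k] pair_row_high[OF p] p by auto
qed

lemma class_eq_swap_matrices: "\<A> = swap_matrix ` Pow {1..k}"
proof
  show "swap_matrix ` Pow {1..k} \<subseteq> \<A>" using swap_matrix_in_class by blast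
  show "\<A> \<subseteq> swap_matrix ` Pow {1..k}"
  proof
    fix M assume M: "M \<in> \<A>"
    define F where "F = {p \<in> {1..k}. row_support n M p \<noteq> I p}"
    have "M = swap_matrix F"
    proof (rule zero_one_matrices_eqI)
      show "M \<in> zero_one_matrices (2*k) n" using M unfolding matrix_class_def by simp
      show "swap_matrix F \<in> zero_one_matrices (2*k) n"
        using swap_matrix_in_class unfolding matrix_class_def by simp
      fix r assume r: "r \<in> {1..2*k}"
      define p where "p = pair_index k r"
      have p: "p \<in> {1..k}" unfolding p_def using pair_index_range[OF r] .
      have "I p \<noteq> I' p" using one_shift_pair_neq[OF shift_pair[OF p]] .
      then have "row_support n M p = swap_on F I I' p"
        and "row_support n M (2 * k + 1 - p) = swap_on F I' I p"
        using class_pair_rows[OF M p] p unfolding F_def swap_on_def by auto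
      moreover have "r = p \<or> r = 2 * k + 1 - p" using pair_index_eq_iff[OF r] p_def by auto
      ultimately show "row_support n M r = row_support n (swap_matrix F) r"
        using row_support_swap_matrix[OF p] by auto
    qed
    then show "M \<in> swap_matrix ` Pow {1..k}" unfolding F_def by blast
  qed
qed

lemma inj_on_swap_matrix: "inj_on swap_matrix (Pow {1..k})"
proof (rule inj_onI)
  fix F G
  assume F: "F \<in> Pow {1..k}" and G: "G \<in> Pow {1..k}" and eq: "swap_matrix F = swap_matrix G"
  have "p \<in> F \<longleftrightarrow> p \<in> G" if p: "p \<in> {1..k}" for p
  proof -
    have "swap_on F I I' p = swap_on G I I' p"
      using eq row_support_swap_matrix(1)[OF p] by metis
    then show ?thesis
      using one_shift_pair_neq[OF shift_pair[OF p]] unfolding swap_on_def by (auto split: if_splits)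
  qed
  then show "F = G" using F G by blast
qed

lemma swap_matrix_convex: "convex_matrix (2*k) n (swap_matrix F)"
  unfolding swap_matrix_def
  by (rule nested_shift_pairs.pair_matrix_convex[OF swap_on_nested_shift_pairs])

end

theorem mainTheorem10:
  fixes k n :: nat and I I' :: "nat \<Rightarrow> nat set"
  assumes "k \<ge> 1" and "n \<ge> 1"
    and "\<forall>i \<in> {1..k}. \<exists>a b. I i = {a..b}"
    and "\<forall>i \<in> {1..k}. \<exists>a b. I' i = {a..b}"
    and "\<forall>i \<in> {1..k}. I i \<subseteq> {1..n} \<and> I' i \<subseteq> {1..n}"
    and "\<forall>i \<in> {1..k}. one_shift_pair (I i) (I' i)"
    and "\<forall>i \<in> {2..k}. I (i - 1) \<union> I' (i - 1) \<subseteq> I i \<inter> I' i"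
    and "\<forall>j \<in> {1..n}. \<exists>i \<in> {1..2*k}. pair_matrix k I I' i j \<noteq> 0"
  shows "convex_class (2*k) n (row_sum n (pair_matrix k I I')) (col_sum (2*k) (pair_matrix k I I'))
         \<and> card (matrix_class (2*k) n (row_sum n (pair_matrix k I I')) (col_sum (2*k) (pair_matrix k I I'))) = 2 ^ k"
proof -
  interpret nested_shift_pairs k n I I'
    using assms(5-7) by unfold_locales auto
  have "convex_class (2*k) n (row_sum n A) (col_sum (2*k) A)"
    unfolding convex_class_def class_eq_swap_matrices using swap_matrix_convex by blast
  moreover have "card \<A> = 2 ^ k"
    unfolding class_eq_swap_matrices card_image[OF inj_on_swap_matrix] by (simp add: card_Pow)
  ultimately show ?thesis by blast
qed

end
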